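(* Let $(\mathscr{C},\mathbb{E},\mathfrak{s})$ be an extriangulated category such that for every object $X$ the morphism $X\to 0$ is an $\mathbb{E}$-inflation and $0\to X$ is an $\mathbb{E}$-deflation, and let $\Sigma$, $\mathbf{E}^1$ and $\mathfrak{r}$ be as in the context. Then the triple $(\mathscr{C},\mathbf{E}^1,\mathfrak{r})$ satisfies the axioms (ET3) and (ET3)$^{\mathrm{op}}$, namely: (ET3) for any $\varepsilon\in\mathbf{E}^1(C,A)$, $\varepsilon'\in\mathbf{E}^1(C',A')$ with $\mathfrak{r}(\varepsilon)=[A\xrightarrow{x}B\xrightarrow{y}C]$, $\mathfrak{r}(\varepsilon')=[A'\xrightarrow{x'}B'\xrightarrow{y'}C']$, and any $a\colon A\to A'$, $b\colon B\to B'$ with $bx=x'a$, there exists $c\colon C\to C'$ with $cy=y'b$ and $\mathbf{E}^1(C,a)(\varepsilon)=\mathbf{E}^1(c,A')(\varepsilon')$; (ET3)$^{\mathrm{op}}$ for the same data and any $b\colon B\to B'$, $c\colon C\to C'$ with $y'b=cy$, there exists $a\colon A\to A'$ with $bx=x'a$ and $\mathbf{E}^1(C,a)(\varepsilon)=\mathbf{E}^1(c,A')(\varepsilon')$.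
   Context: An extriangulated category $(\mathscr{C},\mathbb{E},\mathfrak{s})$ is in the sense of Nakaoka–Palu: $\mathscr{C}$ additive, $\mathbb{E}\colon\mathscr{C}^{\mathrm{op}}\times\mathscr{C}\to Ab$ biadditive, $\mathfrak{s}$ an additive realisation assigning to $\delta\in\mathbb{E}(C,A)$ an equivalence class of sequences $[A\to B\to C]$, satisfying (ET1)–(ET4)$^{\mathrm{op}}$. For $a\colon A\to A'$ and $c\colon C'\to C$ write $a_*\delta=\mathbb{E}(C,a)(\delta)$ and $c^*\delta=\mathbb{E}(c,A)(\delta)$. A morphism $x\colon A\to B$ is an $\mathbb{E}$-inflation if $\mathfrak{s}(\delta)=[A\xrightarrow{x}B\to C]$ for some $\delta\in\mathbb{E}(C,A)$; dually for $\mathbb{E}$-deflations. For each object $Y$, $\Sigma Y$ is a chosen object with $\delta_Y\in\mathbb{E}(\Sigma Y,Y)$ such that $\mathfrak{s}(\delta_Y)=[Y\to 0\to\Sigma Y]$; for $f\colon X\to Y$, $\Sigma f$ is the unique morphism with $f_*\delta_X=(\Sigma f)^*\delta_Y$. $\mathbf{E}^1(C,A)=\mathscr{C}(C,\Sigma A)$, with $\mathbf{E}^1(C,a)(\varepsilon)=\Sigma a\circ\varepsilon$ and $\mathbf{E}^1(c,A)(\varepsilon)=\varepsilon\circ c$. The correspondence $\mathfrak{r}$ assigns to $\varepsilon\in\mathbf{E}^1(C,A)$ the class $\mathfrak{r}(\varepsilon)=\mathfrak{s}(\varepsilon^*\delta_A)$. *)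

theory Defs
  imports Main "HOL-Algebra.Group"
begin

text \<open>Objects of type 'o, morphisms of type 'm (with domain/codomain maps),
  extensions of type 'e: an extension d lies in E(C,A) iff eC d = C and eA d = A.
  cmp g f is the composite g o f.  push a d = a_* d, pull c d = c^* d.
  real d is the realisation s(d), an equivalence class of pairs (x,y) of
  composable morphisms A -x-> B -y-> C.\<close>

record ('o,'m,'e) extri_data =
  Ob :: "'o set"
  Mor :: "'m set"
  Dm :: "'m \<Rightarrow> 'o"
  Cd :: "'m \<Rightarrow> 'o"
  cmp :: "'m \<Rightarrow> 'm \<Rightarrow> 'm"
  idm :: "'o \<Rightarrow> 'm"
  madd :: "'m \<Rightarrow> 'm \<Rightarrow> 'm"
  mzero :: "'o \<Rightarrow> 'o \<Rightarrow> 'm"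
  Ext :: "'e set"
  eC :: "'e \<Rightarrow> 'o"
  eA :: "'e \<Rightarrow> 'o"
  eadd :: "'e \<Rightarrow> 'e \<Rightarrow> 'e"
  ezero :: "'o \<Rightarrow> 'o \<Rightarrow> 'e"
  push :: "'m \<Rightarrow> 'e \<Rightarrow> 'e"
  pull :: "'m \<Rightarrow> 'e \<Rightarrow> 'e"
  real :: "'e \<Rightarrow> ('m \<times> 'm) set"

definition hom :: "('o,'m,'e,'z) extri_data_scheme \<Rightarrow> 'o \<Rightarrow> 'o \<Rightarrow> 'm set" where
  "hom X A B = {f \<in> Mor X. Dm X f = A \<and> Cd X f = B}"

definition ext :: "('o,'m,'e,'z) extri_data_scheme \<Rightarrow> 'o \<Rightarrow> 'o \<Rightarrow> 'e set" where
  "ext X C A = {d \<in> Ext X. eC X d = C \<and> eA X d = A}"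

definition category :: "('o,'m,'e,'z) extri_data_scheme \<Rightarrow> bool" where
  "category X \<longleftrightarrow>
    (\<forall>f\<in>Mor X. Dm X f \<in> Ob X \<and> Cd X f \<in> Ob X) \<and>
    (\<forall>A\<in>Ob X. idm X A \<in> hom X A A) \<and>
    (\<forall>A B C f g. f \<in> hom X A B \<longrightarrow> g \<in> hom X B C \<longrightarrow> cmp X g f \<in> hom X A C) \<and>
    (\<forall>A B f. f \<in> hom X A B \<longrightarrow> cmp X f (idm X A) = f \<and> cmp X (idm X B) f = f) \<and>
    (\<forall>A B C D f g h. f \<in> hom X A B \<longrightarrow> g \<in> hom X B C \<longrightarrow> h \<in> hom X C D \<longrightarrow>
        cmp X h (cmp X g f) = cmp X (cmp X h g) f)"

definition preadditive :: "('o,'m,'e,'z) extri_data_scheme \<Rightarrow> bool" where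
  "preadditive X \<longleftrightarrow>
    (\<forall>A\<in>Ob X. \<forall>B\<in>Ob X.
       comm_group \<lparr>carrier = hom X A B, mult = madd X, one = mzero X A B\<rparr>) \<and>
    (\<forall>A B C f f' g. f \<in> hom X A B \<longrightarrow> f' \<in> hom X A B \<longrightarrow> g \<in> hom X B C \<longrightarrow>
        cmp X g (madd X f f') = madd X (cmp X g f) (cmp X g f')) \<and>
    (\<forall>A B C f g g'. f \<in> hom X A B \<longrightarrow> g \<in> hom X B C \<longrightarrow> g' \<in> hom X B C \<longrightarrow>
        cmp X (madd X g g') f = madd X (cmp X g f) (cmp X g' f))"

definition zero_obj :: "('o,'m,'e,'z) extri_data_scheme \<Rightarrow> 'o \<Rightarrow> bool" where
  "zero_obj X Z \<longleftrightarrow> Z \<in> Ob X \<and>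
     (\<forall>A\<in>Ob X. hom X Z A = {mzero X Z A} \<and> hom X A Z = {mzero X A Z})"

definition biprod :: "('o,'m,'e,'z) extri_data_scheme \<Rightarrow> 'o \<Rightarrow> 'o \<Rightarrow> 'o \<Rightarrow> 'm \<Rightarrow> 'm \<Rightarrow> 'm \<Rightarrow> 'm \<Rightarrow> bool" where
  "biprod X A1 A2 S i1 i2 p1 p2 \<longleftrightarrow> S \<in> Ob X \<and>
     i1 \<in> hom X A1 S \<and> i2 \<in> hom X A2 S \<and> p1 \<in> hom X S A1 \<and> p2 \<in> hom X S A2 \<and>
     cmp X p1 i1 = idm X A1 \<and> cmp X p2 i2 = idm X A2 \<and>
     cmp X p2 i1 = mzero X A1 A2 \<and> cmp X p1 i2 = mzero X A2 A1 \<and>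
     madd X (cmp X i1 p1) (cmp X i2 p2) = idm X S"

definition additive_cat :: "('o,'m,'e,'z) extri_data_scheme \<Rightarrow> bool" where
  "additive_cat X \<longleftrightarrow> category X \<and> preadditive X \<and> (\<exists>Z. zero_obj X Z) \<and>
     (\<forall>A1\<in>Ob X. \<forall>A2\<in>Ob X. \<exists>S i1 i2 p1 p2. biprod X A1 A2 S i1 i2 p1 p2)"

definition biadditive_functor :: "('o,'m,'e,'z) extri_data_scheme \<Rightarrow> bool" where
  "biadditive_functor X \<longleftrightarrow>
    (\<forall>d\<in>Ext X. eC X d \<in> Ob X \<and> eA X d \<in> Ob X) \<and>
    (\<forall>C\<in>Ob X. \<forall>A\<in>Ob X.
       comm_group \<lparr>carrier = ext X C A, mult = eadd X, one = ezero X C A\<rparr>) \<and>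
    (\<forall>A A' C a d. a \<in> hom X A A' \<longrightarrow> d \<in> ext X C A \<longrightarrow> push X a d \<in> ext X C A') \<and>
    (\<forall>C C' A c d. c \<in> hom X C' C \<longrightarrow> d \<in> ext X C A \<longrightarrow> pull X c d \<in> ext X C' A) \<and>
    (\<forall>C A d. d \<in> ext X C A \<longrightarrow> push X (idm X A) d = d \<and> pull X (idm X C) d = d) \<and>
    (\<forall>A A' A'' C a a' d. a \<in> hom X A A' \<longrightarrow> a' \<in> hom X A' A'' \<longrightarrow> d \<in> ext X C A \<longrightarrow>
        push X (cmp X a' a) d = push X a' (push X a d)) \<and>
    (\<forall>C C' C'' A c c' d. c \<in> hom X C' C \<longrightarrow> c' \<in> hom X C'' C' \<longrightarrow> d \<in> ext X C A \<longrightarrow>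
        pull X (cmp X c c') d = pull X c' (pull X c d)) \<and>
    (\<forall>A A' C C' a c d. a \<in> hom X A A' \<longrightarrow> c \<in> hom X C' C \<longrightarrow> d \<in> ext X C A \<longrightarrow>
        push X a (pull X c d) = pull X c (push X a d)) \<and>
    (\<forall>A A' C a d d'. a \<in> hom X A A' \<longrightarrow> d \<in> ext X C A \<longrightarrow> d' \<in> ext X C A \<longrightarrow>
        push X a (eadd X d d') = eadd X (push X a d) (push X a d')) \<and>
    (\<forall>C C' A c d d'. c \<in> hom X C' C \<longrightarrow> d \<in> ext X C A \<longrightarrow> d' \<in> ext X C A \<longrightarrow>
        pull X c (eadd X d d') = eadd X (pull X c d) (pull X c d')) \<and>
    (\<forall>A A' C a a' d. a \<in> hom X A A' \<longrightarrow> a' \<in> hom X A A' \<longrightarrow> d \<in> ext X C A \<longrightarrow>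
        push X (madd X a a') d = eadd X (push X a d) (push X a' d)) \<and>
    (\<forall>C C' A c c' d. c \<in> hom X C' C \<longrightarrow> c' \<in> hom X C' C \<longrightarrow> d \<in> ext X C A \<longrightarrow>
        pull X (madd X c c') d = eadd X (pull X c d) (pull X c' d))"

definition iso :: "('o,'m,'e,'z) extri_data_scheme \<Rightarrow> 'm \<Rightarrow> 'o \<Rightarrow> 'o \<Rightarrow> bool" where
  "iso X f A B \<longleftrightarrow> f \<in> hom X A B \<and>
     (\<exists>g\<in>hom X B A. cmp X g f = idm X A \<and> cmp X f g = idm X B)"

definition seq_equiv :: "('o,'m,'e,'z) extri_data_scheme \<Rightarrow> 'o \<Rightarrow> 'o \<Rightarrow> 'm \<times> 'm \<Rightarrow> 'm \<times> 'm \<Rightarrow> bool" where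
  "seq_equiv X A C p q \<longleftrightarrow> (\<exists>B B' b. fst p \<in> hom X A B \<and> snd p \<in> hom X B C \<and>
      fst q \<in> hom X A B' \<and> snd q \<in> hom X B' C \<and> iso X b B B' \<and>
      cmp X b (fst p) = fst q \<and> cmp X (snd q) b = snd p)"

definition realization :: "('o,'m,'e,'z) extri_data_scheme \<Rightarrow> bool" where
  "realization X \<longleftrightarrow>
    (\<forall>C A d. d \<in> ext X C A \<longrightarrow>
       real X d \<noteq> {} \<and> (\<forall>p\<in>real X d. \<forall>q. q \<in> real X d \<longleftrightarrow> seq_equiv X A C p q)) \<and>
    (\<forall>A B C A' B' C' x y x' y' d d' a c.
       d \<in> ext X C A \<longrightarrow> d' \<in> ext X C' A' \<longrightarrow>
       x \<in> hom X A B \<longrightarrow> y \<in> hom X B C \<longrightarrow> x' \<in> hom X A' B' \<longrightarrow> y' \<in> hom X B' C' \<longrightarrow>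
       (x, y) \<in> real X d \<longrightarrow> (x', y') \<in> real X d' \<longrightarrow>
       a \<in> hom X A A' \<longrightarrow> c \<in> hom X C C' \<longrightarrow> push X a d = pull X c d' \<longrightarrow>
       (\<exists>b\<in>hom X B B'. cmp X b x = cmp X x' a \<and> cmp X y' b = cmp X c y))"

text \<open>(ET2): s is an additive realisation (Nakaoka--Palu Def. 2.10).
  The extension theta in E(C+C',A+A') is the direct sum of d and d'.\<close>
definition additive_realization :: "('o,'m,'e,'z) extri_data_scheme \<Rightarrow> bool" where
  "additive_realization X \<longleftrightarrow> realization X \<and>
    (\<forall>C\<in>Ob X. \<forall>A\<in>Ob X. \<forall>S i1 i2 p1 p2. biprod X A C S i1 i2 p1 p2 \<longrightarrow>
        (i1, p2) \<in> real X (ezero X C A)) \<and>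
    (\<forall>A B C A' B' C' x y x' y' d d' SA ia1 ia2 pa1 pa2 SB ib1 ib2 pb1 pb2
        SC ic1 ic2 pc1 pc2 th.
       d \<in> ext X C A \<longrightarrow> d' \<in> ext X C' A' \<longrightarrow>
       x \<in> hom X A B \<longrightarrow> y \<in> hom X B C \<longrightarrow> x' \<in> hom X A' B' \<longrightarrow> y' \<in> hom X B' C' \<longrightarrow>
       (x, y) \<in> real X d \<longrightarrow> (x', y') \<in> real X d' \<longrightarrow>
       biprod X A A' SA ia1 ia2 pa1 pa2 \<longrightarrow> biprod X B B' SB ib1 ib2 pb1 pb2 \<longrightarrow>
       biprod X C C' SC ic1 ic2 pc1 pc2 \<longrightarrow> th \<in> ext X SC SA \<longrightarrow>
       pull X ic1 (push X pa1 th) = d \<longrightarrow> pull X ic2 (push X pa2 th) = d' \<longrightarrow>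
       pull X ic2 (push X pa1 th) = ezero X C' A \<longrightarrow> pull X ic1 (push X pa2 th) = ezero X C A' \<longrightarrow>
       (madd X (cmp X ib1 (cmp X x pa1)) (cmp X ib2 (cmp X x' pa2)),
        madd X (cmp X ic1 (cmp X y pb1)) (cmp X ic2 (cmp X y' pb2))) \<in> real X th)"

definition ET3 :: "('o,'m,'e,'z) extri_data_scheme \<Rightarrow> bool" where
  "ET3 X \<longleftrightarrow>
    (\<forall>A B C A' B' C' x y x' y' d d' a b.
       d \<in> ext X C A \<longrightarrow> d' \<in> ext X C' A' \<longrightarrow>
       x \<in> hom X A B \<longrightarrow> y \<in> hom X B C \<longrightarrow> x' \<in> hom X A' B' \<longrightarrow> y' \<in> hom X B' C' \<longrightarrow>
       (x, y) \<in> real X d \<longrightarrow> (x', y') \<in> real X d' \<longrightarrow>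
       a \<in> hom X A A' \<longrightarrow> b \<in> hom X B B' \<longrightarrow> cmp X b x = cmp X x' a \<longrightarrow>
       (\<exists>c\<in>hom X C C'. cmp X c y = cmp X y' b \<and> push X a d = pull X c d'))"

definition ET3op :: "('o,'m,'e,'z) extri_data_scheme \<Rightarrow> bool" where
  "ET3op X \<longleftrightarrow>
    (\<forall>A B C A' B' C' x y x' y' d d' b c.
       d \<in> ext X C A \<longrightarrow> d' \<in> ext X C' A' \<longrightarrow>
       x \<in> hom X A B \<longrightarrow> y \<in> hom X B C \<longrightarrow> x' \<in> hom X A' B' \<longrightarrow> y' \<in> hom X B' C' \<longrightarrow>
       (x, y) \<in> real X d \<longrightarrow> (x', y') \<in> real X d' \<longrightarrow>
       b \<in> hom X B B' \<longrightarrow> c \<in> hom X C C' \<longrightarrow> cmp X y' b = cmp X c y \<longrightarrow>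
       (\<exists>a\<in>hom X A A'. cmp X b x = cmp X x' a \<and> push X a d = pull X c d'))"

definition ET4 :: "('o,'m,'e,'z) extri_data_scheme \<Rightarrow> bool" where
  "ET4 X \<longleftrightarrow>
    (\<forall>A B C D F f f' g g' d d'.
       d \<in> ext X D A \<longrightarrow> d' \<in> ext X F B \<longrightarrow>
       f \<in> hom X A B \<longrightarrow> f' \<in> hom X B D \<longrightarrow> g \<in> hom X B C \<longrightarrow> g' \<in> hom X C F \<longrightarrow>
       (f, f') \<in> real X d \<longrightarrow> (g, g') \<in> real X d' \<longrightarrow>
       (\<exists>E h h' e1 e2 d''. E \<in> Ob X \<and> h \<in> hom X A C \<and> h' \<in> hom X C E \<and>
          e1 \<in> hom X D E \<and> e2 \<in> hom X E F \<and> d'' \<in> ext X E A \<and> (h, h') \<in> real X d'' \<and>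
          cmp X g f = h \<and> cmp X e1 f' = cmp X h' g \<and> cmp X e2 h' = g' \<and>
          (e1, e2) \<in> real X (push X f' d') \<and>
          pull X e1 d'' = d \<and> push X f d'' = pull X e2 d'))"

definition ET4op :: "('o,'m,'e,'z) extri_data_scheme \<Rightarrow> bool" where
  "ET4op X \<longleftrightarrow>
    (\<forall>A B C D F f f' g g' d d'.
       d \<in> ext X B D \<longrightarrow> d' \<in> ext X C F \<longrightarrow>
       f' \<in> hom X D A \<longrightarrow> f \<in> hom X A B \<longrightarrow> g' \<in> hom X F B \<longrightarrow> g \<in> hom X B C \<longrightarrow>
       (f', f) \<in> real X d \<longrightarrow> (g', g) \<in> real X d' \<longrightarrow>
       (\<exists>E h h' e1 e2 d''. E \<in> Ob X \<and> h' \<in> hom X E A \<and> h \<in> hom X A C \<and>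
          e1 \<in> hom X D E \<and> e2 \<in> hom X E F \<and> d'' \<in> ext X C E \<and> (h', h) \<in> real X d'' \<and>
          cmp X h' e1 = f' \<and> cmp X f h' = cmp X g' e2 \<and> cmp X g f = h \<and>
          (e1, e2) \<in> real X (pull X g' d) \<and>
          d' = push X e2 d'' \<and> push X e1 d = pull X g d''))"

definition extriangulated :: "('o,'m,'e,'z) extri_data_scheme \<Rightarrow> bool" where
  "extriangulated X \<longleftrightarrow> additive_cat X \<and> biadditive_functor X \<and>
     additive_realization X \<and> ET3 X \<and> ET3op X \<and> ET4 X \<and> ET4op X"

definition inflation :: "('o,'m,'e,'z) extri_data_scheme \<Rightarrow> 'm \<Rightarrow> bool" where
  "inflation X x \<longleftrightarrow> (\<exists>C A d y. d \<in> ext X C A \<and> (x, y) \<in> real X d)"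

definition deflation :: "('o,'m,'e,'z) extri_data_scheme \<Rightarrow> 'm \<Rightarrow> bool" where
  "deflation X y \<longleftrightarrow> (\<exists>C A d x. d \<in> ext X C A \<and> (x, y) \<in> real X d)"

definition SigF :: "('o,'m,'e,'z) extri_data_scheme \<Rightarrow> ('o \<Rightarrow> 'o) \<Rightarrow> ('o \<Rightarrow> 'e) \<Rightarrow> 'm \<Rightarrow> 'm" where
  "SigF X Sig dl f = (THE g. g \<in> hom X (Sig (Dm X f)) (Sig (Cd X f)) \<and>
      push X f (dl (Dm X f)) = pull X g (dl (Cd X f)))"

text \<open>E^1(C,a)(eps) = Sig a o eps, E^1(c,A)(eps) = eps o c, r(eps) = s(eps^* dl_A).\<close>
definition E1push :: "('o,'m,'e,'z) extri_data_scheme \<Rightarrow> ('o \<Rightarrow> 'o) \<Rightarrow> ('o \<Rightarrow> 'e) \<Rightarrow> 'm \<Rightarrow> 'm \<Rightarrow> 'm" where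
  "E1push X Sig dl a eps = cmp X (SigF X Sig dl a) eps"

definition E1pull :: "('o,'m,'e,'z) extri_data_scheme \<Rightarrow> 'm \<Rightarrow> 'm \<Rightarrow> 'm" where
  "E1pull X c eps = cmp X eps c"

definition rr :: "('o,'m,'e,'z) extri_data_scheme \<Rightarrow> ('o \<Rightarrow> 'e) \<Rightarrow> 'o \<Rightarrow> 'm \<Rightarrow> ('m \<times> 'm) set" where
  "rr X dl A eps = real X (pull X eps (dl A))"

end

theory Submission
  imports Defs
begin

text \<open>For each object \<open>A\<close> the map \<open>\<epsilon> \<mapsto> \<epsilon>\<^sup>*\<delta>\<^sub>A\<close> from morphisms \<open>C \<rightarrow> \<Sigma>A\<close> to
  extensions in \<open>E(C, A)\<close> is injective: it is additive, and if \<open>\<epsilon>\<^sup>*\<delta>\<^sub>A = 0\<close> then the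
  realisation axiom gives a morphism from the split sequence \<open>A \<rightarrow> A \<oplus> C \<rightarrow> C\<close> to
  \<open>A \<rightarrow> 0 \<rightarrow> \<Sigma>A\<close> lying over \<open>(1, \<epsilon>)\<close>, so \<open>\<epsilon>\<close> factors through \<open>0\<close>.
  Together with (ET3) for \<open>\<delta>\<^sub>A\<close> and \<open>\<delta>\<^sub>A\<^sub>'\<close> this makes \<open>\<Sigma>a\<close> well defined.
  Since \<open>(\<Sigma>a)\<^sup>*\<delta>\<^sub>A\<^sub>' = a\<^sub>*\<delta>\<^sub>A\<close>, the identity \<open>\<Sigma>a \<circ> \<epsilon> = \<epsilon>' \<circ> c\<close> is then
  equivalent to \<open>a\<^sub>*(\<epsilon>\<^sup>*\<delta>\<^sub>A) = c\<^sup>*(\<epsilon>'\<^sup>*\<delta>\<^sub>A\<^sub>')\<close>, so (ET3) and its dual for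
  \<open>E\<^sup>1\<close> are those for \<open>E\<close> applied to \<open>\<epsilon>\<^sup>*\<delta>\<^sub>A\<close> and \<open>\<epsilon>'\<^sup>*\<delta>\<^sub>A\<^sub>'\<close>.\<close>

locale extriangulated_category =
  fixes X :: "('o,'m,'e,'z) extri_data_scheme"
  assumes extriangulated: "extriangulated X"
begin

lemma additive_cat: "additive_cat X"
  and biadditive_functor: "biadditive_functor X"
  and additive_realization: "additive_realization X"
  and ET3: "ET3 X"
  and ET3op: "ET3op X"
  using extriangulated unfolding extriangulated_def by simp_all

lemma category: "category X"
  and preadditive: "preadditive X"
  using additive_cat unfolding additive_cat_def by simp_all

lemma realization: "realization X"
  using additive_realization unfolding additive_realization_def by simp

lemma hom_Ob: "f \<in> hom X A B \<Longrightarrow> A \<in> Ob X \<and> B \<in> Ob X"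
  using category unfolding category_def hom_def by auto

lemma comp_hom: "f \<in> hom X A B \<Longrightarrow> g \<in> hom X B C \<Longrightarrow> cmp X g f \<in> hom X A C"
  using category unfolding category_def by blast

lemma id_hom: "A \<in> Ob X \<Longrightarrow> idm X A \<in> hom X A A"
  using category unfolding category_def by blast

lemma comp_id_left: "f \<in> hom X A B \<Longrightarrow> cmp X (idm X B) f = f"
  and comp_id_right: "f \<in> hom X A B \<Longrightarrow> cmp X f (idm X A) = f"
  using category unfolding category_def by blast+

lemma comp_assoc:
  "f \<in> hom X A B \<Longrightarrow> g \<in> hom X B C \<Longrightarrow> h \<in> hom X C D \<Longrightarrow>
   cmp X h (cmp X g f) = cmp X (cmp X h g) f"
  using category unfolding category_def by blast

lemma hom_group:
  assumes "A \<in> Ob X" "B \<in> Ob X"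
  shows "group \<lparr>carrier = hom X A B, mult = madd X, one = mzero X A B\<rparr>"
  using preadditive assms unfolding preadditive_def by (blast intro: comm_group.axioms(2))

lemma ext_group:
  assumes "C \<in> Ob X" "A \<in> Ob X"
  shows "group \<lparr>carrier = ext X C A, mult = eadd X, one = ezero X C A\<rparr>"
proof -
  have "comm_group \<lparr>carrier = ext X C A, mult = eadd X, one = ezero X C A\<rparr>"
    by (insert biadditive_functor assms, unfold biadditive_functor_def, elim conjE) blast
  then show ?thesis by (rule comm_group.axioms(2))
qed

lemma zero_hom: "A \<in> Ob X \<Longrightarrow> B \<in> Ob X \<Longrightarrow> mzero X A B \<in> hom X A B"
  using monoid.one_closed[OF group.is_monoid[OF hom_group]] by simp

lemma ezero_ext: "C \<in> Ob X \<Longrightarrow> A \<in> Ob X \<Longrightarrow> ezero X C A \<in> ext X C A"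
  using monoid.one_closed[OF group.is_monoid[OF ext_group]] by simp

lemma zero_add_zero: "A \<in> Ob X \<Longrightarrow> B \<in> Ob X \<Longrightarrow> madd X (mzero X A B) (mzero X A B) = mzero X A B"
  using monoid.l_one[OF group.is_monoid[OF hom_group]] zero_hom by simp

lemma ext_Ob: "d \<in> ext X C A \<Longrightarrow> C \<in> Ob X \<and> A \<in> Ob X"
  using biadditive_functor unfolding biadditive_functor_def ext_def by auto

lemma pull_ext: "c \<in> hom X C' C \<Longrightarrow> d \<in> ext X C A \<Longrightarrow> pull X c d \<in> ext X C' A"
  and push_id: "d \<in> ext X C A \<Longrightarrow> push X (idm X A) d = d"
  by (insert biadditive_functor, unfold biadditive_functor_def, elim conjE; blast)+

lemma pull_comp:
    "c \<in> hom X C' C \<Longrightarrow> c' \<in> hom X C'' C' \<Longrightarrow> d \<in> ext X C A \<Longrightarrow>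
     pull X (cmp X c c') d = pull X c' (pull X c d)"
  and push_pull_commute:
    "a \<in> hom X A A' \<Longrightarrow> c \<in> hom X C' C \<Longrightarrow> d \<in> ext X C A \<Longrightarrow>
     push X a (pull X c d) = pull X c (push X a d)"
  and pull_add:
    "c \<in> hom X C' C \<Longrightarrow> c' \<in> hom X C' C \<Longrightarrow> d \<in> ext X C A \<Longrightarrow>
     pull X (madd X c c') d = eadd X (pull X c d) (pull X c' d)"
  by (insert biadditive_functor, unfold biadditive_functor_def, elim conjE; simp)+

lemma comp_zero_left:
  assumes C: "C \<in> Ob X" and f: "f \<in> hom X A B"
  shows "cmp X (mzero X B C) f = mzero X A C"
proof -
  have A: "A \<in> Ob X" and B: "B \<in> Ob X" using hom_Ob[OF f] by auto
  have "cmp X (mzero X B C) f = cmp X (madd X (mzero X B C) (mzero X B C)) f"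
    using zero_add_zero[OF B C] by simp
  also have "\<dots> = madd X (cmp X (mzero X B C) f) (cmp X (mzero X B C) f)"
    using preadditive zero_hom[OF B C] f unfolding preadditive_def by blast
  finally show ?thesis
    using group.l_cancel_one'[OF hom_group[OF A C]] comp_hom[OF f zero_hom[OF B C]] by simp
qed

lemma pull_zero:
  assumes C': "C' \<in> Ob X" and d: "d \<in> ext X C A"
  shows "pull X (mzero X C' C) d = ezero X C' A"
proof -
  have C: "C \<in> Ob X" and A: "A \<in> Ob X" using ext_Ob[OF d] by auto
  have "pull X (mzero X C' C) d = eadd X (pull X (mzero X C' C) d) (pull X (mzero X C' C) d)"
    using pull_add[OF zero_hom[OF C' C] zero_hom[OF C' C] d] zero_add_zero[OF C' C] by simp
  then show ?thesis
    using group.l_cancel_one'[OF ext_group[OF C' A]] pull_ext[OF zero_hom[OF C' C] d] by simp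
qed

lemma realization_morphism:
  assumes "d \<in> ext X C A" "d' \<in> ext X C' A'"
    "x \<in> hom X A B" "y \<in> hom X B C" "x' \<in> hom X A' B'" "y' \<in> hom X B' C'"
    "(x, y) \<in> real X d" "(x', y') \<in> real X d'"
    "a \<in> hom X A A'" "c \<in> hom X C C'" "push X a d = pull X c d'"
  shows "\<exists>b\<in>hom X B B'. cmp X b x = cmp X x' a \<and> cmp X y' b = cmp X c y"
  by (insert realization assms, unfold realization_def, elim conjE) blast

lemma split_realizes_ezero:
  "biprod X A C S i1 i2 p1 p2 \<Longrightarrow> (i1, p2) \<in> real X (ezero X C A)"
proof -
  assume bp: "biprod X A C S i1 i2 p1 p2"
  then have "A \<in> Ob X" "C \<in> Ob X" using hom_Ob unfolding biprod_def by blast+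
  with bp show ?thesis
    by (insert additive_realization, unfold additive_realization_def, elim conjE) blast
qed

end

locale extriangulated_shift = extriangulated_category X
  for X :: "('o,'m,'e,'z) extri_data_scheme" +
  fixes Z :: 'o and Sig :: "'o \<Rightarrow> 'o" and dl :: "'o \<Rightarrow> 'e"
  assumes zero_obj: "zero_obj X Z"
    and shift: "\<forall>Y\<in>Ob X. Sig Y \<in> Ob X \<and> dl Y \<in> ext X (Sig Y) Y \<and>
                  (mzero X Y Z, mzero X Z (Sig Y)) \<in> real X (dl Y)"
begin

lemma Z_Ob: "Z \<in> Ob X"
  using zero_obj unfolding zero_obj_def by blast

lemma Sig_Ob: "A \<in> Ob X \<Longrightarrow> Sig A \<in> Ob X"
  and dl_ext: "A \<in> Ob X \<Longrightarrow> dl A \<in> ext X (Sig A) A"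
  and dl_realized: "A \<in> Ob X \<Longrightarrow> (mzero X A Z, mzero X Z (Sig A)) \<in> real X (dl A)"
  using shift by blast+

lemma pull_dl_eq_ezero_imp_zero:
  assumes A: "A \<in> Ob X" and k: "k \<in> hom X C (Sig A)"
    and pull_k: "pull X k (dl A) = ezero X C A"
  shows "k = mzero X C (Sig A)"
proof -
  have C: "C \<in> Ob X" using hom_Ob[OF k] by blast
  obtain S i1 i2 p1 p2 where bp: "biprod X A C S i1 i2 p1 p2"
    using additive_cat A C unfolding additive_cat_def by blast
  then have i2: "i2 \<in> hom X C S" and p2: "p2 \<in> hom X S C" and p2_i2: "cmp X p2 i2 = idm X C"
    and i1: "i1 \<in> hom X A S" unfolding biprod_def by auto
  \<comment> \<open>The split sequence maps to \<open>A \<rightarrow> 0 \<rightarrow> \<Sigma>A\<close>, so \<open>k\<close> factors through the zero object\<close>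
  have "push X (idm X A) (ezero X C A) = pull X k (dl A)"
    using push_id[OF ezero_ext[OF C A]] pull_k by simp
  then obtain b where b: "b \<in> hom X S Z" and b_eq: "cmp X (mzero X Z (Sig A)) b = cmp X k p2"
    using realization_morphism[OF ezero_ext[OF C A] dl_ext[OF A] i1 p2
        zero_hom[OF A Z_Ob] zero_hom[OF Z_Ob Sig_Ob[OF A]] split_realizes_ezero[OF bp]
        dl_realized[OF A] id_hom[OF A] k]
    by blast
  have "k = cmp X k (cmp X p2 i2)" using p2_i2 comp_id_right[OF k] by simp
  also have "\<dots> = cmp X (cmp X (mzero X Z (Sig A)) b) i2" using comp_assoc[OF i2 p2 k] b_eq by simp
  also have "\<dots> = mzero X C (Sig A)"
    using comp_zero_left[OF Sig_Ob[OF A] b] comp_zero_left[OF Sig_Ob[OF A] i2] by simp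
  finally show ?thesis .
qed

lemma pull_dl_inj:
  assumes A: "A \<in> Ob X" and g: "g \<in> hom X C (Sig A)" and h: "h \<in> hom X C (Sig A)"
    and eq: "pull X g (dl A) = pull X h (dl A)"
  shows "g = h"
proof -
  have C: "C \<in> Ob X" using hom_Ob[OF g] by blast
  define G where "G = \<lparr>carrier = hom X C (Sig A), mult = madd X, one = mzero X C (Sig A)\<rparr>"
  interpret G: group G unfolding G_def using hom_group[OF C Sig_Ob[OF A]] .
  have carrier_G: "carrier G = hom X C (Sig A)" and mult_G: "(\<otimes>\<^bsub>G\<^esub>) = madd X"
    and one_G: "\<one>\<^bsub>G\<^esub> = mzero X C (Sig A)" by (simp_all add: G_def)
  have h_inv: "inv\<^bsub>G\<^esub> h \<in> hom X C (Sig A)" using G.inv_closed h carrier_G by simp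
  have "pull X (g \<otimes>\<^bsub>G\<^esub> inv\<^bsub>G\<^esub> h) (dl A) = pull X (h \<otimes>\<^bsub>G\<^esub> inv\<^bsub>G\<^esub> h) (dl A)"
    using pull_add[OF g h_inv dl_ext[OF A]] pull_add[OF h h_inv dl_ext[OF A]] eq mult_G by simp
  also have "\<dots> = ezero X C A"
    using G.r_inv h carrier_G one_G pull_zero[OF C dl_ext[OF A]] by simp
  finally have "g \<otimes>\<^bsub>G\<^esub> inv\<^bsub>G\<^esub> h = \<one>\<^bsub>G\<^esub>"
    using pull_dl_eq_ezero_imp_zero[OF A] G.m_closed g h_inv carrier_G one_G by simp
  then show ?thesis
    using G.inv_solve_right'[OF G.one_closed, of g h] g h carrier_G by simp
qed

lemma SigF_hom: "a \<in> hom X A A' \<Longrightarrow> SigF X Sig dl a \<in> hom X (Sig A) (Sig A')"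
  and push_dl_eq_pull_SigF: "a \<in> hom X A A' \<Longrightarrow> push X a (dl A) = pull X (SigF X Sig dl a) (dl A')"
proof -
  assume a: "a \<in> hom X A A'"
  then have A: "A \<in> Ob X" and A': "A' \<in> Ob X" and dom_a: "Dm X a = A" and cod_a: "Cd X a = A'"
    using hom_Ob unfolding hom_def by auto
  have "cmp X (idm X Z) (mzero X A Z) = cmp X (mzero X A' Z) a"
    using comp_id_left[OF zero_hom[OF A Z_Ob]] comp_zero_left[OF Z_Ob a] by simp
  then obtain c where "c \<in> hom X (Sig A) (Sig A')" "push X a (dl A) = pull X c (dl A')"
    using ET3[unfolded ET3_def, rule_format, OF dl_ext[OF A] dl_ext[OF A']
        zero_hom[OF A Z_Ob] zero_hom[OF Z_Ob Sig_Ob[OF A]]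
        zero_hom[OF A' Z_Ob] zero_hom[OF Z_Ob Sig_Ob[OF A']]
        dl_realized[OF A] dl_realized[OF A'] a id_hom[OF Z_Ob]]
    by blast
  then have "\<exists>!g. g \<in> hom X (Sig A) (Sig A') \<and> push X a (dl A) = pull X g (dl A')"
    using pull_dl_inj[OF A'] by metis
  from theI'[OF this] show "SigF X Sig dl a \<in> hom X (Sig A) (Sig A')"
    and "push X a (dl A) = pull X (SigF X Sig dl a) (dl A')"
    unfolding SigF_def dom_a cod_a by blast+
qed

lemma E1push_eq_E1pullI:
  assumes eps: "eps \<in> hom X C (Sig A)" and eps': "eps' \<in> hom X C' (Sig A')"
    and a: "a \<in> hom X A A'" and c: "c \<in> hom X C C'"
    and eq: "push X a (pull X eps (dl A)) = pull X c (pull X eps' (dl A'))"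
  shows "E1push X Sig dl a eps = E1pull X c eps'"
proof -
  have A: "A \<in> Ob X" and A': "A' \<in> Ob X" using hom_Ob[OF a] by auto
  let ?s = "SigF X Sig dl a"
  have "pull X (cmp X ?s eps) (dl A') = pull X eps (push X a (dl A))"
    using pull_comp[OF SigF_hom[OF a] eps dl_ext[OF A']] push_dl_eq_pull_SigF[OF a] by simp
  also have "\<dots> = pull X c (pull X eps' (dl A'))"
    using push_pull_commute[OF a eps dl_ext[OF A]] eq by simp
  also have "\<dots> = pull X (cmp X eps' c) (dl A')"
    using pull_comp[OF eps' c dl_ext[OF A']] by simp
  finally have "cmp X ?s eps = cmp X eps' c"
    using pull_dl_inj[OF A' comp_hom[OF eps SigF_hom[OF a]] comp_hom[OF c eps']] by blast
  then show ?thesis unfolding E1push_def E1pull_def .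
qed

lemma pull_dl_ext: "eps \<in> hom X C (Sig A) \<Longrightarrow> A \<in> Ob X \<Longrightarrow> pull X eps (dl A) \<in> ext X C A"
  using pull_ext dl_ext by blast

lemma E1_ET3:
  assumes eps: "eps \<in> hom X C (Sig A)" and eps': "eps' \<in> hom X C' (Sig A')"
    and "x \<in> hom X A B" "y \<in> hom X B C" "x' \<in> hom X A' B'" "y' \<in> hom X B' C'"
    and "(x, y) \<in> rr X dl A eps" "(x', y') \<in> rr X dl A' eps'"
    and a: "a \<in> hom X A A'" and "b \<in> hom X B B'" "cmp X b x = cmp X x' a"
  shows "\<exists>c\<in>hom X C C'. cmp X c y = cmp X y' b \<and> E1push X Sig dl a eps = E1pull X c eps'"
proof -
  have A: "A \<in> Ob X" and A': "A' \<in> Ob X" using hom_Ob[OF a] by auto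
  show ?thesis
    using ET3[unfolded ET3_def, rule_format, OF pull_dl_ext[OF eps A] pull_dl_ext[OF eps' A']
        assms(3-8)[unfolded rr_def] assms(9-11)]
      E1push_eq_E1pullI[OF eps eps' a] by blast
qed

lemma E1_ET3op:
  assumes eps: "eps \<in> hom X C (Sig A)" and eps': "eps' \<in> hom X C' (Sig A')"
    and x: "x \<in> hom X A B" "y \<in> hom X B C" and x': "x' \<in> hom X A' B'" "y' \<in> hom X B' C'"
    and "(x, y) \<in> rr X dl A eps" "(x', y') \<in> rr X dl A' eps'"
    and "b \<in> hom X B B'" and c: "c \<in> hom X C C'" and "cmp X y' b = cmp X c y"
  shows "\<exists>a\<in>hom X A A'. cmp X b x = cmp X x' a \<and> E1push X Sig dl a eps = E1pull X c eps'"
proof -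
  have A: "A \<in> Ob X" and A': "A' \<in> Ob X" using hom_Ob[OF x(1)] hom_Ob[OF x'(1)] by auto
  show ?thesis
    using ET3op[unfolded ET3op_def, rule_format, OF pull_dl_ext[OF eps A] pull_dl_ext[OF eps' A']
        assms(3-8)[unfolded rr_def] assms(9-11)]
      E1push_eq_E1pullI[OF eps eps' _ c] by blast
qed

end

theorem proposition3p12:
  fixes X :: "('o,'m,'e) extri_data" and Z :: 'o
    and Sig :: "'o \<Rightarrow> 'o" and dl :: "'o \<Rightarrow> 'e"
  assumes ext: "extriangulated X"
    and zero: "zero_obj X Z"
    and infl: "\<forall>A\<in>Ob X. inflation X (mzero X A Z)"
    and defl: "\<forall>A\<in>Ob X. deflation X (mzero X Z A)"
    and sig: "\<forall>Y\<in>Ob X. Sig Y \<in> Ob X \<and> dl Y \<in> ext X (Sig Y) Y \<and>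
                (mzero X Y Z, mzero X Z (Sig Y)) \<in> real X (dl Y)"
  shows
    "(\<forall>A B C A' B' C' x y x' y' eps eps' a b.
        eps \<in> hom X C (Sig A) \<longrightarrow> eps' \<in> hom X C' (Sig A') \<longrightarrow>
        x \<in> hom X A B \<longrightarrow> y \<in> hom X B C \<longrightarrow> x' \<in> hom X A' B' \<longrightarrow> y' \<in> hom X B' C' \<longrightarrow>
        (x, y) \<in> rr X dl A eps \<longrightarrow> (x', y') \<in> rr X dl A' eps' \<longrightarrow>
        a \<in> hom X A A' \<longrightarrow> b \<in> hom X B B' \<longrightarrow> cmp X b x = cmp X x' a \<longrightarrow>
        (\<exists>c\<in>hom X C C'. cmp X c y = cmp X y' b \<and>
            E1push X Sig dl a eps = E1pull X c eps'))
     \<and>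
     (\<forall>A B C A' B' C' x y x' y' eps eps' b c.
        eps \<in> hom X C (Sig A) \<longrightarrow> eps' \<in> hom X C' (Sig A') \<longrightarrow>
        x \<in> hom X A B \<longrightarrow> y \<in> hom X B C \<longrightarrow> x' \<in> hom X A' B' \<longrightarrow> y' \<in> hom X B' C' \<longrightarrow>
        (x, y) \<in> rr X dl A eps \<longrightarrow> (x', y') \<in> rr X dl A' eps' \<longrightarrow>
        b \<in> hom X B B' \<longrightarrow> c \<in> hom X C C' \<longrightarrow> cmp X y' b = cmp X c y \<longrightarrow>
        (\<exists>a\<in>hom X A A'. cmp X b x = cmp X x' a \<and>
            E1push X Sig dl a eps = E1pull X c eps'))"
proof -
  \<comment> \<open>\<open>infl\<close> and \<open>defl\<close> only serve to construct \<open>\<Sigma>\<close>, which \<open>sig\<close> already provides\<close>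
  interpret extriangulated_shift X Z Sig dl
    using ext zero sig by unfold_locales
  show ?thesis
    by (intro conjI allI impI) (rule E1_ET3 E1_ET3op; assumption)+
qed

end
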